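(* Let $A(x)=\sum_{n\ge0}a_nx^n$ and $B(x)=\sum_{k\ge0}b_kx^k$ be formal power series over a field of characteristic $0$, and assume that either $B$ is a polynomial or $a_0=0$ (so that $B(A(x))=\sum_k b_kA(x)^k$ is a well-defined formal power series). Suppose $B(A(x))=x$. Then $a_1\ne0$ and for every $n\ge2$, \[ a_n=-a_1\sum_{k\ge1}b_k\,t^{(k)}_n , \] where the sum has only finitely many nonzero terms.
   Context: For a sequence $(a_n)_{n\ge0}$ with generating function $A(x)=\sum_{n\ge0}a_nx^n$, set $a^{(k)}_n=[x^n]A(x)^k$ for $k\ge1$, $n\ge0$. The truncated convolution powers $t^{(k)}_n$ ($k\ge1$, $n\ge0$) are defined recursively by $t^{(1)}_n=0$ for all $n$, and for $k>1$ \[ t^{(k)}_n=\sum_{j=1}^{n-1}a_{n-j}\,a^{(k-1)}_j+a_0\,t^{(k-1)}_n \] (the sum being empty when $n\le1$). *)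

theory Defs
  imports "HOL-Computational_Algebra.Formal_Power_Series" "HOL-Library.Groups_Big_Fun"
begin

definition conv_pow :: "'a::comm_ring_1 fps \<Rightarrow> nat \<Rightarrow> nat \<Rightarrow> 'a" where
  "conv_pow A k n = fps_nth (A ^ k) n"

text \<open>Truncated convolution powers t^(k)_n for k \<ge> 1 (the value at k = 0 is an
  unused dummy, set to 0).\<close>
fun trunc_pow :: "'a::comm_ring_1 fps \<Rightarrow> nat \<Rightarrow> nat \<Rightarrow> 'a" where
  "trunc_pow A 0 n = 0"
| "trunc_pow A (Suc 0) n = 0"
| "trunc_pow A (Suc (Suc k)) n =
     (\<Sum>j = 1..<n. fps_nth A (n - j) * conv_pow A (Suc k) j) + fps_nth A 0 * trunc_pow A (Suc k) n"

text \<open>General composition B(A(x)) = \<Sum>_k b_k A(x)^k, coefficientwise; the inner sum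
  is a finite-support sum (well defined when B is a polynomial or fps_nth A 0 = 0).\<close>
definition gen_compose :: "'a::comm_ring_1 fps \<Rightarrow> 'a fps \<Rightarrow> 'a fps" where
  "gen_compose B A = Abs_fps (\<lambda>n. Sum_any (\<lambda>k. fps_nth B k * fps_nth (A ^ k) n))"

end

theory Submission
  imports Defs
begin

unbundle fps_syntax

(* Splitting off the two terms of the convolution for A^k that involve a_n gives
   a^(k)_n = t^(k)_n + k a_0^(k-1) a_n  for n >= 1.  Summing against b_k, the
   coefficient of x^n in B(A(x)) is  sum_k b_k t^(k)_n + a_n B'(a_0).  Since
   t^(k)_1 = 0, comparing coefficients of x in B(A(x)) = x gives a_1 B'(a_0) = 1,
   and comparing those of x^n for n >= 2 gives 0 = sum_k b_k t^(k)_n + a_n / a_1. *)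

lemma fps_nth_power_eq_trunc_pow:
  fixes A :: "'a::comm_ring_1 fps"
  assumes "n \<ge> 1"
  shows "(A ^ k) $ n = trunc_pow A k n + of_nat k * (A $ 0) ^ (k - 1) * A $ n"
  using assms
proof (induction A k n rule: trunc_pow.induct)
  case (3 A k n)
  have split: "{0..n} = insert 0 (insert n {1..<n})"
    using 3 by auto
  have "(A ^ Suc (Suc k)) $ n = (\<Sum>j=0..n. (A ^ Suc k) $ j * A $ (n - j))"
    by (simp add: power_Suc2 fps_mult_nth del: power_Suc)
  also have "\<dots> = (A ^ Suc k) $ 0 * A $ n + (A ^ Suc k) $ n * A $ 0
      + (\<Sum>j=1..<n. A $ (n - j) * conv_pow A (Suc k) j)"
    using 3 by (simp add: split conv_pow_def mult.commute)
  also have "\<dots> = trunc_pow A (Suc (Suc k)) n + of_nat (Suc (Suc k)) * (A $ 0) ^ Suc k * A $ n"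
    using 3 by (simp add: fps_power_zeroth algebra_simps)
  finally show ?case
    by simp
qed simp_all

lemma trunc_pow_Suc_0 [simp]: "trunc_pow A k (Suc 0) = 0"
  by (induction A k "Suc 0" rule: trunc_pow.induct) simp_all

lemma fps_nth_power_below_eq_0:
  fixes A :: "'a::comm_ring_1 fps"
  assumes "A $ 0 = 0" and "j < k"
  shows "(A ^ k) $ j = 0"
proof (cases "A = 0")
  case False
  then have "subdegree A \<ge> 1"
    using assms(1) subdegree_eq_0_iff[of A] by linarith
  then show ?thesis
    using assms(2) by (intro fps_pow_nth_below_subdegree) (metis le_trans mult_le_mono2 mult_1_right not_le)
qed (use assms(2) in \<open>simp add: zero_power\<close>)

lemma finite_support_compose_terms:
  fixes A B :: "'a::comm_ring_1 fps"
  assumes "finite {k. B $ k \<noteq> 0} \<or> A $ 0 = 0"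
  shows "finite {k. B $ k * (A ^ k) $ n \<noteq> 0}"
  using assms
proof
  assume "finite {k. B $ k \<noteq> 0}"
  then show ?thesis
    by (rule rev_finite_subset) auto
next
  assume "A $ 0 = 0"
  then have "{k. B $ k * (A ^ k) $ n \<noteq> 0} \<subseteq> {..n}"
    using fps_nth_power_below_eq_0[OF \<open>A $ 0 = 0\<close>, of n] by (auto simp: not_less[symmetric])
  then show ?thesis
    using finite_subset by blast
qed

lemma finite_support_derivative_terms:
  fixes A B :: "'a::comm_ring_1 fps"
  assumes "finite {k. B $ k \<noteq> 0} \<or> A $ 0 = 0"
  shows "finite {k. B $ k * of_nat k * (A $ 0) ^ (k - 1) \<noteq> 0}"
  using assms
proof
  assume "finite {k. B $ k \<noteq> 0}"
  then show ?thesis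
    by (rule rev_finite_subset) auto
next
  assume "A $ 0 = 0"
  then have "{k. B $ k * of_nat k * (A $ 0) ^ (k - 1) \<noteq> 0} \<subseteq> {1}"
    by (auto simp: power_0_left le_Suc_eq split: if_splits)
  then show ?thesis
    using finite_subset by blast
qed

lemma fps_nth_gen_compose:
  fixes A B :: "'a::comm_ring_1 fps"
  assumes wd: "finite {k. B $ k \<noteq> 0} \<or> A $ 0 = 0" and n: "n \<ge> 1"
  shows "finite {k. B $ k * trunc_pow A k n \<noteq> 0}"
    and "gen_compose B A $ n = Sum_any (\<lambda>k. B $ k * trunc_pow A k n)
           + A $ n * Sum_any (\<lambda>k. B $ k * of_nat k * (A $ 0) ^ (k - 1))"
proof -
  define c where "c k = B $ k * (A ^ k) $ n" for k
  define d where "d k = B $ k * of_nat k * (A $ 0) ^ (k - 1)" for k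
  have fin_c: "finite {k. c k \<noteq> 0}"
    unfolding c_def using wd by (rule finite_support_compose_terms)
  have fin_d: "finite {k. d k \<noteq> 0}"
    unfolding d_def using wd by (rule finite_support_derivative_terms)
  have fin_ad: "finite {k. A $ n * d k \<noteq> 0}"
    using fin_d by (rule rev_finite_subset) auto
  have trunc: "B $ k * trunc_pow A k n = c k - A $ n * d k" for k
    using fps_nth_power_eq_trunc_pow[OF n, of A k] by (simp add: c_def d_def algebra_simps)
  have "{k. B $ k * trunc_pow A k n \<noteq> 0} \<subseteq> {k. c k \<noteq> 0} \<union> {k. A $ n * d k \<noteq> 0}"
    unfolding trunc by auto
  then show fin_t: "finite {k. B $ k * trunc_pow A k n \<noteq> 0}"
    using fin_c fin_ad finite_subset by blast
  have "gen_compose B A $ n = Sum_any (\<lambda>k. B $ k * trunc_pow A k n + A $ n * d k)"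
    by (simp add: gen_compose_def trunc c_def)
  also have "\<dots> = Sum_any (\<lambda>k. B $ k * trunc_pow A k n) + A $ n * Sum_any d"
    using fin_t fin_ad fin_d by (simp add: Sum_any.distrib Sum_any_right_distrib)
  finally show "gen_compose B A $ n = Sum_any (\<lambda>k. B $ k * trunc_pow A k n)
      + A $ n * Sum_any (\<lambda>k. B $ k * of_nat k * (A $ 0) ^ (k - 1))"
    by (simp add: d_def)
qed

theorem theorem1:
  fixes A B :: "'a::field_char_0 fps"
  assumes wd: "finite {k. fps_nth B k \<noteq> 0} \<or> fps_nth A 0 = 0"
    and inv: "gen_compose B A = fps_X"
  shows "fps_nth A 1 \<noteq> 0 \<and>
    (\<forall>n\<ge>2. finite {k. k \<ge> 1 \<and> fps_nth B k * trunc_pow A k n \<noteq> 0} \<and>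
       fps_nth A n = - fps_nth A 1 * (\<Sum>k\<in>{k. k \<ge> 1 \<and> fps_nth B k * trunc_pow A k n \<noteq> 0}. fps_nth B k * trunc_pow A k n))"
proof -
  define D where "D = Sum_any (\<lambda>k. B $ k * of_nat k * (A $ 0) ^ (k - 1))"
  have support: "{k. k \<ge> 1 \<and> B $ k * trunc_pow A k n \<noteq> 0} = {k. B $ k * trunc_pow A k n \<noteq> 0}" for n
    by (auto simp: Suc_le_eq intro!: gr0I)
  have "A $ 1 * D = 1"
    using fps_nth_gen_compose(2)[OF wd, of 1] inv by (simp add: D_def)
  then have a1: "A $ 1 \<noteq> 0" and D: "D = 1 / A $ 1"
    by (auto simp: eq_divide_eq mult.commute)
  have "A $ n = - A $ 1 * Sum_any (\<lambda>k. B $ k * trunc_pow A k n)" if "n \<ge> 2" for n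
  proof -
    have "0 = Sum_any (\<lambda>k. B $ k * trunc_pow A k n) + A $ n * D"
      using fps_nth_gen_compose(2)[OF wd, of n] inv that unfolding D_def by simp
    then show ?thesis
      using a1 by (simp add: D field_simps eq_neg_iff_add_eq_0)
  qed
  then show ?thesis
    unfolding support using a1 fps_nth_gen_compose(1)[OF wd] by (simp add: Sum_any.expand_set)
qed

end
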